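(* Under the hypotheses: $(\boldsymbol\Sigma,\sigma)$ is a primitive Markov subshift on a countable alphabet with associated $\mathbb F$, $K_0$; $A:\boldsymbol\Sigma\to\mathbb R$ is bounded above, locally H\"older continuous with constant $H_A$, and $\inf A|_{\bigcup_{i\in\mathbb F}[i]}>-\infty$. Define $$u_A(\mathbf x)=\sup\{S_k(A-\beta_A)(\mathbf y):k\ge0,\ \mathbf y\in\boldsymbol\Sigma,\ \sigma^k(\mathbf y)=\mathbf x\}.$$ Then for all $\mathbf x\in\boldsymbol\Sigma$, $$0\le u_A(\mathbf x)\le\max\Big\{\mathrm{Var}(A)+K_0\big(\sup A-\inf A|_{\bigcup_{i\in\mathbb F}[i]}\big),\ K_0(\sup A-\beta_A)\Big\},$$ $A+u_A-u_A\circ\sigma\le\beta_A$, and $\mathrm{Var}_k(u_A)\le\frac{H_A}{1-\lambda}\lambda^k$ for all $k\ge1$.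
   Context: Let $\mathbf M:\mathbb Z_+\times\mathbb Z_+\to\{0,1\}$ be a transition matrix. Put $\mathcal B_0=\{i:\mathbf M(i,j)=1\text{ for some }j\}$, $\mathcal B_n=\{i:\mathbf M(i,j)=1\text{ for some }j\in\mathcal B_{n-1}\}$. $\mathbf M$ is primitive if there exist $\mathbb F\subseteq\mathbb Z_+$ and an integer $K_0\ge0$ such that for all $i,j\in\bigcap_{n\ge0}\mathcal B_n$ there are $\ell_1,\dots,\ell_{K_0}\in\mathbb F$ with $\mathbf M(i,\ell_1)\mathbf M(\ell_1,\ell_2)\cdots\mathbf M(\ell_{K_0},j)=1$. $\boldsymbol\Sigma=\{\mathbf x\in\mathbb Z_+^{\mathbb Z_+}:\mathbf M(x_j,x_{j+1})=1\ \forall j\}$ with metric $d(\mathbf x,\mathbf y)=\lambda^{\min\{j:x_j\neq y_j\}}$, $\lambda\in(0,1)$ fixed; $\sigma$ the left shift; $[i]=\{\mathbf x:x_0=i\}$. $\mathcal M_\sigma$ = $\sigma$-invariant Borel probabilities; $\beta_A=\sup_{\mu\in\mathcal M_\sigma}\int A\,d\mu$. $S_kA=\sum_{j=0}^{k-1}A\circ\sigma^j$, $S_0A=0$. $\mathrm{Var}_k(A)=\sup\{A(\mathbf x)-A(\mathbf y):d(\mathbf x,\mathbf y)\le\lambda^k\}$; $\mathrm{Var}(A)=\sum_{k\ge1}\mathrm{Var}_k(A)$; $A$ is locally H\"older continuous with constant $H_A>0$ if $\mathrm{Var}_k(A)\le H_A\lambda^k$ for all $k\ge1$. *)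

theory Defs
  imports "HOL-Analysis.Analysis" "HOL-Probability.Probability"
begin

type_synonym seq = "nat \<Rightarrow> nat"

text \<open>Transition matrix: Mt i j means M(i,j) = 1.\<close>

fun Bset :: "(nat \<Rightarrow> nat \<Rightarrow> bool) \<Rightarrow> nat \<Rightarrow> nat set" where
  "Bset Mt 0 = {i. \<exists>j. Mt i j}"
| "Bset Mt (Suc n) = {i. \<exists>j\<in>Bset Mt n. Mt i j}"

definition core :: "(nat \<Rightarrow> nat \<Rightarrow> bool) \<Rightarrow> nat set" where
  "core Mt = (\<Inter>n. Bset Mt n)"

definition primitive :: "(nat \<Rightarrow> nat \<Rightarrow> bool) \<Rightarrow> nat set \<Rightarrow> nat \<Rightarrow> bool" where
  "primitive Mt F K0 \<longleftrightarrow>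
     (\<forall>i\<in>core Mt. \<forall>j\<in>core Mt. \<exists>l :: nat \<Rightarrow> nat.
        l 0 = i \<and> l (Suc K0) = j \<and> (\<forall>m\<in>{1..K0}. l m \<in> F) \<and>
        (\<forall>m\<le>K0. Mt (l m) (l (Suc m))))"

definition Sigma :: "(nat \<Rightarrow> nat \<Rightarrow> bool) \<Rightarrow> seq set" where
  "Sigma Mt = {x. \<forall>j. Mt (x j) (x (Suc j))}"

definition shift :: "seq \<Rightarrow> seq" where
  "shift x = (\<lambda>j. x (Suc j))"

definition dist_sh :: "real \<Rightarrow> seq \<Rightarrow> seq \<Rightarrow> real" where
  "dist_sh lam x y = (if x = y then 0 else lam ^ (LEAST j. x j \<noteq> y j))"

definition Ssum :: "nat \<Rightarrow> (seq \<Rightarrow> real) \<Rightarrow> seq \<Rightarrow> real" where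
  "Ssum k A x = (\<Sum>j<k. A ((shift ^^ j) x))"

definition Var_k :: "(nat \<Rightarrow> nat \<Rightarrow> bool) \<Rightarrow> real \<Rightarrow> nat \<Rightarrow> (seq \<Rightarrow> real) \<Rightarrow> real" where
  "Var_k Mt lam k A = Sup {A x - A y | x y. x \<in> Sigma Mt \<and> y \<in> Sigma Mt \<and> dist_sh lam x y \<le> lam ^ k}"

definition Var :: "(nat \<Rightarrow> nat \<Rightarrow> bool) \<Rightarrow> real \<Rightarrow> (seq \<Rightarrow> real) \<Rightarrow> real" where
  "Var Mt lam A = (\<Sum>k. Var_k Mt lam (Suc k) A)"

text \<open>Borel sigma-algebra on Sigma: the topology of d on Sigma is the subspace
  product topology (nat discrete), so Borel sets are those of restrict_space borel.\<close>
definition Minv :: "(nat \<Rightarrow> nat \<Rightarrow> bool) \<Rightarrow> seq measure set" where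
  "Minv Mt = {\<mu>. prob_space \<mu> \<and> sets \<mu> = sets (restrict_space borel (Sigma Mt)) \<and>
      (\<forall>B\<in>sets \<mu>. emeasure \<mu> (shift -` B \<inter> space \<mu>) = emeasure \<mu> B)}"

text \<open>beta_A = sup of the integrals; since A is bounded above, integrals lie in
  [-infinity, sup A], and the supremum is attained over measures for which A is
  integrable (the -infinity values do not contribute).\<close>
definition beta :: "(nat \<Rightarrow> nat \<Rightarrow> bool) \<Rightarrow> (seq \<Rightarrow> real) \<Rightarrow> real" where
  "beta Mt A = Sup {integral\<^sup>L \<mu> A | \<mu>. \<mu> \<in> Minv Mt \<and> integrable \<mu> A}"

text \<open>u_A as an extended real (so its finiteness is part of the claim).\<close>
definition uA :: "(nat \<Rightarrow> nat \<Rightarrow> bool) \<Rightarrow> (seq \<Rightarrow> real) \<Rightarrow> seq \<Rightarrow> ereal" where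
  "uA Mt A x = Sup {ereal (Ssum k (\<lambda>z. A z - beta Mt A) y) | k y.
      y \<in> Sigma Mt \<and> (shift ^^ k) y = x}"

end

theory Submission imports Defs begin

(* Three of its properties are formal consequences of this definition alone: u_A >= 0 (take
   k = 0), u_A(x) + A(x) - beta_A <= u_A(shift x) (extend each pre-image by one step), and a
   comparison of u_A at nearby points (splice the pre-images of x onto y and use the bounded
   distortion of Birkhoff sums of a Hoelder potential).  The only non-formal ingredient is
   the upper bound, which makes u_A finite.  For it we close an arbitrary admissible word
   y_0 ... y_(m-1) into a periodic orbit by a connecting word of length K0 with letters in F
   (primitivity); the uniform measure on this orbit is shift invariant, so the orbit average
   of A is at most beta_A, and comparing the Birkhoff sum along y with the one along the
   periodic point costs at most Var(A). *)

lemma funpow_shift: "(shift ^^ j) x = (\<lambda>i. x (i + j))"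
  by (induction j) (auto simp: shift_def)

lemma Sigma_funpow_shift: "x \<in> Sigma Mt \<Longrightarrow> (shift ^^ j) x \<in> Sigma Mt"
  by (simp add: Sigma_def funpow_shift)

lemma Sigma_shift: "x \<in> Sigma Mt \<Longrightarrow> shift x \<in> Sigma Mt"
  using Sigma_funpow_shift[of x Mt 1] by simp

text \<open>Every letter of an admissible sequence has admissible continuations of every length,
  hence lies in the core, where primitivity applies.\<close>
lemma Sigma_core: assumes "x \<in> Sigma Mt" shows "x j \<in> core Mt"
proof -
  have "x j \<in> Bset Mt n" for n
    using assms by (induction n arbitrary: j) (auto simp: Sigma_def)
  then show ?thesis by (auto simp: core_def)
qed

lemma dist_sh_le_iff:
  assumes "0 < lam" "lam < 1"
  shows "dist_sh lam x y \<le> lam ^ k \<longleftrightarrow> (\<forall>i<k. x i = y i)"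
proof (cases "x = y")
  case True then show ?thesis using assms by (simp add: dist_sh_def)
next
  case False
  define d where "d = (LEAST j. x j \<noteq> y j)"
  have "\<exists>j. x j \<noteq> y j" using False by auto
  then have first: "x d \<noteq> y d" unfolding d_def by (rule LeastI_ex)
  have below: "x i = y i" if "i < d" for i
    using not_less_Least[of i "\<lambda>j. x j \<noteq> y j"] that unfolding d_def by simp
  have "(\<forall>i<k. x i = y i) \<longleftrightarrow> k \<le> d"
  proof
    assume "\<forall>i<k. x i = y i"
    then show "k \<le> d" using first by (meson not_le)
  qed (use below in simp)
  moreover have "lam ^ d \<le> lam ^ k \<longleftrightarrow> k \<le> d" using assms by simp
  ultimately show ?thesis using False by (simp add: dist_sh_def d_def)
qed

lemma Ssum_minus_const: "Ssum k (\<lambda>z. f z - c) x = Ssum k f x - real k * c"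
  by (simp add: Ssum_def sum_subtractf)

lemma Ssum_Suc: "Ssum (Suc k) f x = Ssum k f x + f ((shift ^^ k) x)"
  by (simp add: Ssum_def)

lemma sum_lessThan_reverse_Suc: "(\<Sum>j<m. f (m - j)) = (\<Sum>i<m. f (Suc i) :: 'a::comm_monoid_add)"
  by (subst sum.nat_diff_reindex[symmetric]) (auto intro!: sum.cong simp: Suc_diff_Suc)

lemma sum_lessThan_add: "(\<Sum>j<(m::nat) + k. f j) = (\<Sum>j<m. f j) + (\<Sum>i<k. f (m + i) :: 'a::comm_monoid_add)"
  by (induction k) (auto simp: add.assoc)

section \<open>Hoelder potentials\<close>

locale holder_potential =
  fixes Mt :: "nat \<Rightarrow> nat \<Rightarrow> bool" and lam :: real and A :: "seq \<Rightarrow> real" and H :: real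
  assumes lam0: "0 < lam" and lam1: "lam < 1" and H_pos: "H > 0"
    and holder: "\<And>k x y. k \<ge> 1 \<Longrightarrow> x \<in> Sigma Mt \<Longrightarrow> y \<in> Sigma Mt \<Longrightarrow>
                   dist_sh lam x y \<le> lam ^ k \<Longrightarrow> A x - A y \<le> H * lam ^ k"
begin

lemma holder_cylinder:
  assumes "k \<ge> 1" "x \<in> Sigma Mt" "y \<in> Sigma Mt" "\<forall>i<k. x i = y i"
  shows "A x - A y \<le> H * lam ^ k"
  using assms holder dist_sh_le_iff[OF lam0 lam1] by blast

lemma Var_k_upper:
  assumes "k \<ge> 1" "x \<in> Sigma Mt" "y \<in> Sigma Mt" "\<forall>i<k. x i = y i"
  shows "A x - A y \<le> Var_k Mt lam k A"
  unfolding Var_k_def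
proof (rule cSup_upper)
  show "bdd_above {A x - A y | x y. x \<in> Sigma Mt \<and> y \<in> Sigma Mt \<and> dist_sh lam x y \<le> lam ^ k}"
    using assms(1) by (intro bdd_aboveI[of _ "H * lam ^ k"]) (auto intro: holder)
qed (use assms dist_sh_le_iff[OF lam0 lam1] in blast)

lemma Var_k_bounds:
  assumes "k \<ge> 1" "z \<in> Sigma Mt"
  shows "0 \<le> Var_k Mt lam k A" "Var_k Mt lam k A \<le> H * lam ^ k"
proof -
  show "0 \<le> Var_k Mt lam k A" using Var_k_upper[OF assms(1,2,2)] by simp
  have "dist_sh lam z z \<le> lam ^ k" using lam0 by (simp add: dist_sh_def)
  then show "Var_k Mt lam k A \<le> H * lam ^ k"
    unfolding Var_k_def using assms by (intro cSup_least) (auto intro: holder)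
qed

lemma Var_partial_le:
  assumes "z \<in> Sigma Mt"
  shows "(\<Sum>i<m. Var_k Mt lam (Suc i) A) \<le> Var Mt lam A"
proof -
  have "summable (\<lambda>k. Var_k Mt lam (Suc k) A)"
  proof (rule summable_comparison_test')
    show "summable (\<lambda>k. H * lam ^ Suc k)" using lam0 lam1
      by (intro summable_mult summable_geometric) auto
    show "norm (Var_k Mt lam (Suc k) A) \<le> H * lam ^ Suc k" for k
      using Var_k_bounds[OF _ assms, of "Suc k"] by simp
  qed
  then show ?thesis unfolding Var_def
    by (rule sum_le_suminf) (auto intro: Var_k_bounds(1)[OF _ assms])
qed

lemma Ssum_diff_le_Var:
  assumes x: "x \<in> Sigma Mt" and y: "y \<in> Sigma Mt" and agree: "\<forall>i<m. x i = y i"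
  shows "Ssum m A x - Ssum m A y \<le> Var Mt lam A"
proof -
  have "Ssum m A x - Ssum m A y = (\<Sum>j<m. A ((shift ^^ j) x) - A ((shift ^^ j) y))"
    by (simp add: Ssum_def sum_subtractf)
  also have "\<dots> \<le> (\<Sum>j<m. Var_k Mt lam (m - j) A)"
    using agree by (intro sum_mono Var_k_upper Sigma_funpow_shift x y) (auto simp: funpow_shift)
  also have "\<dots> = (\<Sum>i<m. Var_k Mt lam (Suc i) A)" by (rule sum_lessThan_reverse_Suc)
  also have "\<dots> \<le> Var Mt lam A" by (rule Var_partial_le[OF x])
  finally show ?thesis .
qed

lemma Ssum_distortion:
  assumes k: "k \<ge> 1" and x: "x \<in> Sigma Mt" and y: "y \<in> Sigma Mt" and agree: "\<forall>i<m + k. x i = y i"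
  shows "Ssum m A x - Ssum m A y \<le> H / (1 - lam) * lam ^ k"
proof -
  have "Ssum m A x - Ssum m A y = (\<Sum>j<m. A ((shift ^^ j) x) - A ((shift ^^ j) y))"
    by (simp add: Ssum_def sum_subtractf)
  also have "\<dots> \<le> (\<Sum>j<m. H * lam ^ k * lam ^ (m - j))"
  proof (rule sum_mono)
    fix j assume "j \<in> {..<m}"
    then have "A ((shift ^^ j) x) - A ((shift ^^ j) y) \<le> H * lam ^ (k + (m - j))"
      using k agree by (intro holder_cylinder Sigma_funpow_shift x y) (auto simp: funpow_shift)
    then show "A ((shift ^^ j) x) - A ((shift ^^ j) y) \<le> H * lam ^ k * lam ^ (m - j)"
      by (simp add: power_add mult.assoc)
  qed
  also have "\<dots> = H * lam ^ k * (\<Sum>i<m. lam ^ Suc i)"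
    by (simp add: sum_distrib_left[symmetric] sum_lessThan_reverse_Suc[where f = "power lam"]
        del: power_Suc)
  also have "\<dots> \<le> H * lam ^ k * (1 / (1 - lam))"
  proof (rule mult_left_mono)
    have "(\<Sum>i<m. lam ^ Suc i) \<le> (\<Sum>i<m. lam ^ i)"
      using lam0 lam1 by (intro sum_mono) (simp add: power_decreasing)
    also have "\<dots> = (1 - lam ^ m) / (1 - lam)" using lam1 by (simp add: sum_gp_strict)
    also have "\<dots> \<le> 1 / (1 - lam)" using lam0 lam1 by (intro divide_right_mono) auto
    finally show "(\<Sum>i<m. lam ^ Suc i) \<le> 1 / (1 - lam)" .
  qed (use H_pos lam0 in auto)
  finally show ?thesis by simp
qed

lemma A_continuous: "continuous_on (Sigma Mt) A"
  unfolding continuous_on_topological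
proof (intro ballI allI impI)
  fix x B assume x: "x \<in> Sigma Mt" and B: "open B" "A x \<in> B"
  obtain e where e: "e > 0" "ball (A x) e \<subseteq> B" using openE[OF B] by metis
  obtain n where n: "lam ^ n < e / H" using real_arch_pow_inv[of "e/H" lam] e H_pos lam1 by auto
  have "H * lam ^ Suc n \<le> H * lam ^ n" using lam0 lam1 H_pos by (intro mult_left_mono) auto
  moreover have "H * lam ^ n < e" using n H_pos by (simp add: pos_less_divide_eq mult.commute)
  ultimately have small: "H * lam ^ Suc n < e" by linarith
  define U where "U = (\<Inter>i<Suc n. (\<lambda>y. y i) -` {x i})"
  have "open U" unfolding U_def
    by (intro open_INT finite_lessThan ballI open_vimage) (auto intro: discrete_topology_class.open_discrete)
  moreover have "x \<in> U" by (simp add: U_def)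
  moreover have "A y \<in> B" if "y \<in> Sigma Mt" "y \<in> U" for y
  proof -
    have "A y - A x \<le> H * lam ^ Suc n" "A x - A y \<le> H * lam ^ Suc n"
      using holder_cylinder[of "Suc n" y x] holder_cylinder[of "Suc n" x y] x that
      by (auto simp: U_def)
    then have "dist (A y) (A x) < e" using small by (simp add: dist_real_def abs_le_iff)
    then show ?thesis using e by (auto simp: dist_commute)
  qed
  ultimately show "\<exists>U. open U \<and> x \<in> U \<and> (\<forall>y\<in>Sigma Mt. y \<in> U \<longrightarrow> A y \<in> B)" by blast
qed

lemma A_measurable: "A \<in> borel_measurable (restrict_space borel (Sigma Mt))"
  by (rule borel_measurable_continuous_on_restrict[OF A_continuous])

end

section \<open>Periodic orbit measures and \<open>beta_A\<close>\<close>

lemma shift_measurable: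
  "shift \<in> measurable (restrict_space borel (Sigma Mt)) (restrict_space borel (Sigma Mt))"
proof (rule measurable_restrict_space2)
  show "shift \<in> space (restrict_space borel (Sigma Mt)) \<rightarrow> Sigma Mt"
    by (auto simp: space_restrict_space Sigma_shift)
  have "continuous_on (Sigma Mt) shift" unfolding shift_def
    by (intro continuous_on_coordinatewise_then_product
        continuous_on_subset[OF continuous_on_product_coordinates]) auto
  then show "shift \<in> borel_measurable (restrict_space borel (Sigma Mt))"
    by (rule borel_measurable_continuous_on_restrict)
qed

lemma rotation_bij: "n > 0 \<Longrightarrow> bij_betw (\<lambda>j. Suc j mod n) {..<n} {..<n}"
  unfolding bij_betw_def
  by (intro conjI endo_inj_surj) (auto simp: inj_on_def mod_Suc split: if_splits)

definition orbit_measure :: "(nat \<Rightarrow> nat \<Rightarrow> bool) \<Rightarrow> seq \<Rightarrow> nat \<Rightarrow> seq measure" where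
  "orbit_measure Mt p n =
     distr (measure_pmf (pmf_of_set {..<n})) (restrict_space borel (Sigma Mt)) (\<lambda>j. (shift ^^ j) p)"

text \<open>For a periodic point of period \<open>n\<close> the shift acts on the orbit as the rotation
  \<open>j \<mapsto> j + 1 mod n\<close> of the index set, which preserves the uniform distribution.\<close>
lemma orbit_measure_invariant:
  assumes p: "p \<in> Sigma Mt" and n: "n > 0" and per: "(shift ^^ n) p = p"
  shows "orbit_measure Mt p n \<in> Minv Mt"
proof -
  define N where "N = restrict_space borel (Sigma Mt)"
  define P where "P = measure_pmf (pmf_of_set {..<n})"
  define g where "g = (\<lambda>j. (shift ^^ j) p)"
  define \<mu> where "\<mu> = orbit_measure Mt p n"
  have g: "g \<in> measurable P N" "g \<in> measurable (count_space UNIV) N"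
    using Sigma_funpow_shift[OF p] by (auto simp: N_def P_def g_def space_restrict_space)
  have \<mu>: "\<mu> = distr P N g" by (simp add: \<mu>_def orbit_measure_def N_def P_def g_def)
  have rotation: "distr P (count_space UNIV) (\<lambda>j. Suc j mod n) = P"
  proof -
    have "map_pmf (\<lambda>j. Suc j mod n) (pmf_of_set {..<n}) = pmf_of_set {..<n}"
      using rotation_bij[OF n] n by (simp add: map_pmf_of_set_inj bij_betw_def lessThan_empty_iff)
    then show ?thesis by (simp add: P_def map_pmf_rep_eq[symmetric])
  qed
  have "distr \<mu> N shift = distr P N (shift \<circ> g)"
    unfolding \<mu> N_def by (rule distr_distr[OF shift_measurable g(1)[unfolded N_def]])
  also have "\<dots> = distr P N (g \<circ> (\<lambda>j. Suc j mod n))"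
    by (rule distr_cong) (simp_all add: g_def funpow_mod_eq[OF per])
  also have "\<dots> = distr (distr P (count_space UNIV) (\<lambda>j. Suc j mod n)) N g"
    by (rule distr_distr[symmetric, OF g(2)]) (simp add: P_def)
  finally have shift_\<mu>: "distr \<mu> N shift = \<mu>" unfolding rotation \<mu> .
  show ?thesis unfolding \<mu>_def[symmetric] Minv_def
  proof (intro CollectI conjI ballI)
    show "prob_space \<mu>" unfolding \<mu> P_def by (rule measure_pmf.prob_space_distr[OF g(1)[unfolded P_def]])
    show "sets \<mu> = sets (restrict_space borel (Sigma Mt))" by (simp add: \<mu> N_def)
    fix B assume "B \<in> sets \<mu>"
    then have "B \<in> sets N" by (simp add: \<mu>)
    have "emeasure \<mu> (shift -` B \<inter> space \<mu>) = emeasure (distr \<mu> N shift) B"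
      using \<open>B \<in> sets N\<close> shift_measurable[of Mt] by (simp add: emeasure_distr \<mu> N_def)
    then show "emeasure \<mu> (shift -` B \<inter> space \<mu>) = emeasure \<mu> B" by (simp add: shift_\<mu>)
  qed
qed

lemma orbit_measure_integral:
  fixes f :: "seq \<Rightarrow> real"
  assumes p: "p \<in> Sigma Mt" and n: "n > 0" and f: "f \<in> borel_measurable (restrict_space borel (Sigma Mt))"
  shows "integrable (orbit_measure Mt p n) f"
    and "integral\<^sup>L (orbit_measure Mt p n) f = (\<Sum>j<n. f ((shift ^^ j) p)) / n"
proof -
  define P where "P = pmf_of_set {..<n}"
  have g: "(\<lambda>j. (shift ^^ j) p) \<in> measurable (measure_pmf P) (restrict_space borel (Sigma Mt))"
    using Sigma_funpow_shift[OF p] by (simp add: space_restrict_space)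
  have "set_pmf P = {..<n}" using n unfolding P_def by (subst set_pmf_of_set) auto
  then show "integrable (orbit_measure Mt p n) f"
    unfolding orbit_measure_def P_def[symmetric] using integrable_distr_eq[OF g f]
    by (simp add: integrable_measure_pmf_finite)
  have "integral\<^sup>L (orbit_measure Mt p n) f = integral\<^sup>L (measure_pmf P) (\<lambda>j. f ((shift ^^ j) p))"
    unfolding orbit_measure_def P_def[symmetric] by (rule integral_distr[OF g f])
  also have "\<dots> = (\<Sum>j<n. f ((shift ^^ j) p)) / n" unfolding P_def using n by (subst integral_pmf_of_set) auto
  finally show "integral\<^sup>L (orbit_measure Mt p n) f = (\<Sum>j<n. f ((shift ^^ j) p)) / n" .
qed

lemma integral_le_Sup:
  fixes f :: "seq \<Rightarrow> real"
  assumes \<mu>: "\<mu> \<in> Minv Mt" and int: "integrable \<mu> f" and bdd: "bdd_above (f ` Sigma Mt)"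
  shows "integral\<^sup>L \<mu> f \<le> Sup (f ` Sigma Mt)"
proof -
  have ps: "prob_space \<mu>" and sets: "sets \<mu> = sets (restrict_space borel (Sigma Mt))"
    using \<mu> by (auto simp: Minv_def)
  have sp: "space \<mu> = Sigma Mt" using sets_eq_imp_space_eq[OF sets] by (simp add: space_restrict_space)
  have "integral\<^sup>L \<mu> f \<le> integral\<^sup>L \<mu> (\<lambda>_. Sup (f ` Sigma Mt))"
    using int ps sp bdd
    by (intro integral_mono) (auto intro: cSup_upper finite_measure.integrable_const prob_space.finite_measure)
  also have "\<dots> = Sup (f ` Sigma Mt)" using ps by (simp add: prob_space.prob_space)
  finally show ?thesis .
qed

lemma periodic_average_beta:
  assumes p: "p \<in> Sigma Mt" and n: "n > 0" and per: "(shift ^^ n) p = p"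
    and f: "f \<in> borel_measurable (restrict_space borel (Sigma Mt))" and bdd: "bdd_above (f ` Sigma Mt)"
  shows "(\<Sum>j<n. f ((shift ^^ j) p)) / n \<le> beta Mt f" and "beta Mt f \<le> Sup (f ` Sigma Mt)"
proof -
  let ?I = "{integral\<^sup>L \<mu> f | \<mu>. \<mu> \<in> Minv Mt \<and> integrable \<mu> f}"
  have avg: "(\<Sum>j<n. f ((shift ^^ j) p)) / n \<in> ?I"
    using orbit_measure_invariant[OF p n per] orbit_measure_integral[OF p n f] by (metis (mono_tags, lifting) mem_Collect_eq)
  have "bdd_above ?I" using bdd by (intro bdd_aboveI[of _ "Sup (f ` Sigma Mt)"]) (auto intro: integral_le_Sup)
  then show "(\<Sum>j<n. f ((shift ^^ j) p)) / n \<le> beta Mt f" unfolding beta_def by (rule cSup_upper[OF avg])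
  show "beta Mt f \<le> Sup (f ` Sigma Mt)"
    unfolding beta_def using avg bdd by (intro cSup_least) (auto intro: integral_le_Sup)
qed

section \<open>Periodic points from primitivity\<close>

lemma periodic_point_of_loop:
  assumes n: "n > 0" and closed: "q n = q 0" and edges: "\<forall>r<n. Mt (q r) (q (Suc r))"
  shows "(\<lambda>i. q (i mod n)) \<in> Sigma Mt" and "(shift ^^ n) (\<lambda>i. q (i mod n)) = (\<lambda>i. q (i mod n))"
proof -
  have "q (Suc i mod n) = q (Suc (i mod n))" for i using closed by (simp add: mod_Suc)
  then show "(\<lambda>i. q (i mod n)) \<in> Sigma Mt" using edges n by (simp add: Sigma_def)
  show "(shift ^^ n) (\<lambda>i. q (i mod n)) = (\<lambda>i. q (i mod n))" by (simp add: funpow_shift)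
qed

lemma primitive_periodic_closure:
  assumes prim: "primitive Mt F K0" and y: "y \<in> Sigma Mt" and m: "m \<ge> 1"
  shows "\<exists>p\<in>Sigma Mt. (shift ^^ (m + K0)) p = p \<and> (\<forall>j<m. p j = y j) \<and> (\<forall>i<K0. p (m + i) \<in> F)"
proof -
  obtain l where l0: "l 0 = y (m - 1)" and lK: "l (Suc K0) = y 0" and lF: "\<forall>i\<in>{1..K0}. l i \<in> F"
    and lM: "\<forall>i\<le>K0. Mt (l i) (l (Suc i))"
    using prim Sigma_core[OF y] unfolding primitive_def by blast
  define n where "n = m + K0"
  define q where "q r = (if r < m then y r else l (r + 1 - m))" for r
  have edges: "\<forall>r<n. Mt (q r) (q (Suc r))"
  proof (intro allI impI)
    fix r assume "r < n"
    consider "Suc r < m" | "Suc r = m" | "m \<le> r" by linarith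
    then show "Mt (q r) (q (Suc r))"
    proof cases
      case 1 then show ?thesis using y by (simp add: q_def Sigma_def)
    next
      case 2 then show ?thesis using lM l0 by (auto simp: q_def)
    next
      case 3 then show ?thesis using lM \<open>r < n\<close> by (simp add: q_def n_def Suc_diff_le)
    qed
  qed
  have "q n = q 0" using lK m by (simp add: q_def n_def)
  with edges m have "(\<lambda>i. q (i mod n)) \<in> Sigma Mt" "(shift ^^ n) (\<lambda>i. q (i mod n)) = (\<lambda>i. q (i mod n))"
    by (auto intro: periodic_point_of_loop simp: n_def)
  moreover have "\<forall>j<m. q (j mod n) = y j" by (simp add: q_def n_def)
  moreover have "\<forall>i<K0. q ((m + i) mod n) \<in> F" using lF by (auto simp: q_def n_def)
  ultimately show ?thesis unfolding n_def by blast
qed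

section \<open>Formal properties of \<open>u_A\<close>\<close>

text \<open>\<open>u_A x\<close> is the least upper bound of the Birkhoff sums of \<open>A - beta_A\<close> along pre-images of
  \<open>x\<close>; the empty pre-image (\<open>k = 0\<close>) shows that it is nonnegative.\<close>
lemma uA_upper:
  "y \<in> Sigma Mt \<Longrightarrow> (shift ^^ k) y = x \<Longrightarrow> ereal (Ssum k (\<lambda>z. A z - beta Mt A) y) \<le> uA Mt A x"
  unfolding uA_def by (rule Sup_upper) blast

lemma uA_least:
  "(\<And>k y. y \<in> Sigma Mt \<Longrightarrow> (shift ^^ k) y = x \<Longrightarrow> ereal (Ssum k (\<lambda>z. A z - beta Mt A) y) \<le> c)
   \<Longrightarrow> uA Mt A x \<le> c"
  unfolding uA_def by (rule Sup_least) blast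

lemma uA_nonneg: "x \<in> Sigma Mt \<Longrightarrow> 0 \<le> uA Mt A x"
  using uA_upper[of x Mt 0 x A] by (simp add: Ssum_def zero_ereal_def)

text \<open>\<open>u_A\<close> is a sub-action: pre-images of \<open>x\<close> extend by one step to pre-images of \<open>shift x\<close>.\<close>
lemma uA_subaction: "uA Mt A x + ereal (A x - beta Mt A) \<le> uA Mt A (shift x)"
proof -
  have "uA Mt A x \<le> uA Mt A (shift x) - ereal (A x - beta Mt A)"
  proof (rule uA_least)
    fix k y assume y: "y \<in> Sigma Mt" "(shift ^^ k) y = x"
    then have "ereal (Ssum (Suc k) (\<lambda>z. A z - beta Mt A) y) \<le> uA Mt A (shift x)"
      by (intro uA_upper) auto
    then show "ereal (Ssum k (\<lambda>z. A z - beta Mt A) y) \<le> uA Mt A (shift x) - ereal (A x - beta Mt A)"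
      using y(2) by (simp add: Ssum_Suc ereal_le_minus)
  qed
  then show ?thesis by (simp add: ereal_le_minus)
qed

lemma splice_Sigma:
  assumes y: "y \<in> Sigma Mt" and x: "x \<in> Sigma Mt" and join: "x 0 = y m"
  shows "(\<lambda>i. if i < m then y i else x (i - m)) \<in> Sigma Mt"
    and "(shift ^^ m) (\<lambda>i. if i < m then y i else x (i - m)) = x"
proof -
  have yM: "Mt (y i) (y (Suc i))" and xM: "Mt (x i) (x (Suc i))" for i
    using x y by (auto simp: Sigma_def)
  show "(\<lambda>i. if i < m then y i else x (i - m)) \<in> Sigma Mt"
    unfolding Sigma_def
  proof (intro CollectI allI)
    fix i
    consider "Suc i < m" | "Suc i = m" | "m \<le> i" by linarith
    then show "Mt (if i < m then y i else x (i - m)) (if Suc i < m then y (Suc i) else x (Suc i - m))"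
    proof cases
      case 2 then show ?thesis using yM[of i] join by auto
    qed (auto simp: yM xM Suc_diff_le)
  qed
  show "(shift ^^ m) (\<lambda>i. if i < m then y i else x (i - m)) = x" by (simp add: funpow_shift)
qed

text \<open>Variation of \<open>u_A\<close>: splicing every pre-image of \<open>x\<close> onto \<open>x'\<close> changes its Birkhoff sum
  by at most the distortion bound.\<close>
lemma (in holder_potential) uA_variation:
  assumes k: "k \<ge> 1" and x': "x' \<in> Sigma Mt" and agree: "\<forall>i<k. x i = x' i"
  shows "uA Mt A x \<le> uA Mt A x' + ereal (H / (1 - lam) * lam ^ k)"
proof (rule uA_least)
  fix m y assume y: "y \<in> Sigma Mt" "(shift ^^ m) y = x"
  define y' where "y' = (\<lambda>i. if i < m then y i else x' (i - m))"
  have tail: "y (i + m) = x i" for i using fun_cong[OF y(2), of i] by (simp add: funpow_shift)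
  then have "x' 0 = y m" using agree k by (metis add_0 less_le_trans zero_less_one)
  then have y': "y' \<in> Sigma Mt" "(shift ^^ m) y' = x'"
    unfolding y'_def using splice_Sigma[OF y(1) x'] by auto
  have "y i = y' i" if "i < m + k" for i
  proof (cases "i < m")
    case False
    then have "y i = x (i - m)" using tail[of "i - m"] by simp
    then show ?thesis using agree that False by (simp add: y'_def)
  qed (simp add: y'_def)
  then have "Ssum m A y - Ssum m A y' \<le> H / (1 - lam) * lam ^ k"
    by (intro Ssum_distortion k y(1) y'(1)) blast
  then have "ereal (Ssum m (\<lambda>z. A z - beta Mt A) y)
      \<le> ereal (Ssum m (\<lambda>z. A z - beta Mt A) y') + ereal (H / (1 - lam) * lam ^ k)"
    by (simp add: Ssum_minus_const)
  also have "\<dots> \<le> uA Mt A x' + ereal (H / (1 - lam) * lam ^ k)"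
    using uA_upper[OF y'] by (rule add_right_mono)
  finally show "ereal (Ssum m (\<lambda>z. A z - beta Mt A) y) \<le> \<dots>" .
qed

section \<open>Finiteness of \<open>u_A\<close> on primitive shifts\<close>

locale primitive_potential = holder_potential +
  fixes F :: "nat set" and K0 :: nat
  assumes prim: "primitive Mt F K0"
    and bdd_A: "bdd_above (A ` Sigma Mt)"
    and bdd_F: "bdd_below (A ` {x \<in> Sigma Mt. x 0 \<in> F})"
begin

text \<open>Primitivity provides periodic points, so \<open>beta_A\<close> is a genuine supremum bounded by \<open>sup A\<close>.\<close>
lemma beta_le_Sup: assumes x: "x \<in> Sigma Mt" shows "beta Mt A \<le> Sup (A ` Sigma Mt)"
proof -
  obtain p where p: "p \<in> Sigma Mt" "(shift ^^ (1 + K0)) p = p"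
    using primitive_periodic_closure[OF prim x, of 1] by auto
  show ?thesis by (rule periodic_average_beta(2)[OF p(1) _ p(2) A_measurable bdd_A]) simp
qed

text \<open>The key estimate: closing an orbit segment of length \<open>m\<close> into a periodic orbit costs at
  most \<open>Var(A)\<close> on the segment and \<open>K0 (beta - inf A|F)\<close> on the connecting word, while the
  periodic orbit itself contributes at most \<open>beta\<close> per step.\<close>
lemma Ssum_upper_bound:
  assumes y: "y \<in> Sigma Mt" and m: "m \<ge> 1"
  shows "Ssum m (\<lambda>z. A z - beta Mt A) y
           \<le> Var Mt lam A + K0 * (beta Mt A - Inf (A ` {x \<in> Sigma Mt. x 0 \<in> F}))"
proof -
  define b where "b = beta Mt A"
  define IF where "IF = Inf (A ` {x \<in> Sigma Mt. x 0 \<in> F})"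
  obtain p where p: "p \<in> Sigma Mt" "(shift ^^ (m + K0)) p = p" "\<forall>j<m. p j = y j" "\<forall>i<K0. p (m + i) \<in> F"
    using primitive_periodic_closure[OF prim y m] by blast
  have "(\<Sum>j<m + K0. A ((shift ^^ j) p)) / (m + K0) \<le> b"
    unfolding b_def using m by (intro periodic_average_beta(1)[OF p(1) _ p(2) A_measurable bdd_A]) auto
  then have periodic: "(\<Sum>j<m + K0. A ((shift ^^ j) p)) \<le> real m * b + real K0 * b"
    using m by (simp add: divide_le_eq algebra_simps)
  have "real K0 * IF \<le> (\<Sum>i<K0. A ((shift ^^ (m + i)) p))"
  proof -
    have "(shift ^^ (m + i)) p \<in> {x \<in> Sigma Mt. x 0 \<in> F}" if "i < K0" for i
    proof -
      have "((shift ^^ (m + i)) p) 0 = p (m + i)" by (simp add: funpow_shift)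
      then show ?thesis using p(4) that Sigma_funpow_shift[OF p(1)] by simp
    qed
    then show ?thesis
      using sum_bounded_below[of "{..<K0}" IF "\<lambda>i. A ((shift ^^ (m + i)) p)"]
      unfolding IF_def by (auto intro: cInf_lower[OF _ bdd_F])
  qed
  moreover have "Ssum m A y - Ssum m A p \<le> Var Mt lam A"
    using p(3) by (intro Ssum_diff_le_Var y p(1)) simp
  moreover have "Ssum m A p = (\<Sum>j<m + K0. A ((shift ^^ j) p)) - (\<Sum>i<K0. A ((shift ^^ (m + i)) p))"
    by (simp add: Ssum_def sum_lessThan_add)
  ultimately show ?thesis using periodic
    unfolding b_def[symmetric] IF_def[symmetric] by (simp add: Ssum_minus_const right_diff_distrib)
qed

text \<open>The bound of the theorem; the empty pre-image is covered by \<open>beta_A \<le> sup A\<close>.\<close>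
lemma uA_upper_bound:
  assumes x: "x \<in> Sigma Mt"
  shows "uA Mt A x \<le> ereal (max (Var Mt lam A + real K0 * (Sup (A ` Sigma Mt) - Inf (A ` {z \<in> Sigma Mt. z 0 \<in> F})))
                                 (real K0 * (Sup (A ` Sigma Mt) - beta Mt A)))" (is "_ \<le> ereal ?B")
proof (rule uA_least)
  fix k y assume y: "y \<in> Sigma Mt" "(shift ^^ k) y = x"
  show "ereal (Ssum k (\<lambda>z. A z - beta Mt A) y) \<le> ereal ?B"
  proof (cases "k = 0")
    case True then show ?thesis using beta_le_Sup[OF x] by (simp add: Ssum_def max.coboundedI2)
  next
    case False
    then have "Ssum k (\<lambda>z. A z - beta Mt A) y
        \<le> Var Mt lam A + K0 * (beta Mt A - Inf (A ` {x \<in> Sigma Mt. x 0 \<in> F}))"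
      by (intro Ssum_upper_bound y) simp
    also have "\<dots> \<le> Var Mt lam A + K0 * (Sup (A ` Sigma Mt) - Inf (A ` {z \<in> Sigma Mt. z 0 \<in> F}))"
      using beta_le_Sup[OF x] by (simp add: mult_left_mono)
    also have "\<dots> \<le> ?B" by (rule max.cobounded1)
    finally show ?thesis by (simp only: ereal_less_eq(3))
  qed
qed

lemma uA_real: assumes "x \<in> Sigma Mt" obtains u where "uA Mt A x = ereal u"
proof -
  obtain B where "uA Mt A x \<le> ereal B" using uA_upper_bound[OF assms] by blast
  with uA_nonneg[OF assms] show ?thesis using that by (cases "uA Mt A x") auto
qed

lemma uA_subaction_real:
  assumes x: "x \<in> Sigma Mt"
  shows "A x + real_of_ereal (uA Mt A x) - real_of_ereal (uA Mt A (shift x)) \<le> beta Mt A"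
proof -
  obtain u v where "uA Mt A x = ereal u" "uA Mt A (shift x) = ereal v"
    using uA_real[OF x] uA_real[OF Sigma_shift[OF x]] by metis
  then show ?thesis using uA_subaction[of Mt A x] by simp
qed

lemma uA_variation_real:
  assumes k: "k \<ge> 1" and x: "x \<in> Sigma Mt" and y: "y \<in> Sigma Mt" and d: "dist_sh lam x y \<le> lam ^ k"
  shows "real_of_ereal (uA Mt A x) - real_of_ereal (uA Mt A y) \<le> H / (1 - lam) * lam ^ k"
proof -
  obtain u v where "uA Mt A x = ereal u" "uA Mt A y = ereal v"
    using uA_real[OF x] uA_real[OF y] by metis
  moreover have "\<forall>i<k. x i = y i" using d dist_sh_le_iff[OF lam0 lam1] by blast
  then have "uA Mt A x \<le> uA Mt A y + ereal (H / (1 - lam) * lam ^ k)" by (rule uA_variation[OF k y])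
  ultimately show ?thesis by simp
qed

end

theorem mainTheorem5:
  fixes Mt :: "nat \<Rightarrow> nat \<Rightarrow> bool" and F :: "nat set" and K0 :: nat
    and lam :: real and A :: "seq \<Rightarrow> real" and H :: real
  assumes lam: "0 < lam" "lam < 1"
    and prim: "primitive Mt F K0"
    and bdd_above: "bdd_above (A ` Sigma Mt)"
    and H_pos: "H > 0"
    and holder: "\<And>k x y. k \<ge> 1 \<Longrightarrow> x \<in> Sigma Mt \<Longrightarrow> y \<in> Sigma Mt \<Longrightarrow>
                   dist_sh lam x y \<le> lam ^ k \<Longrightarrow> A x - A y \<le> H * lam ^ k"
    and inf_F: "bdd_below (A ` {x \<in> Sigma Mt. x 0 \<in> F})"
  shows "(\<forall>x\<in>Sigma Mt.
           0 \<le> uA Mt A x \<and>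
           uA Mt A x \<le> ereal (max (Var Mt lam A + real K0 * (Sup (A ` Sigma Mt) - Inf (A ` {z \<in> Sigma Mt. z 0 \<in> F})))
                                   (real K0 * (Sup (A ` Sigma Mt) - beta Mt A))))
    \<and> (\<forall>x\<in>Sigma Mt. A x + real_of_ereal (uA Mt A x) - real_of_ereal (uA Mt A (shift x)) \<le> beta Mt A)
    \<and> (\<forall>k\<ge>1. \<forall>x\<in>Sigma Mt. \<forall>y\<in>Sigma Mt. dist_sh lam x y \<le> lam ^ k \<longrightarrow>
           real_of_ereal (uA Mt A x) - real_of_ereal (uA Mt A y) \<le> H / (1 - lam) * lam ^ k)"
proof -
  interpret primitive_potential Mt lam A H F K0
    using assms by unfold_locales auto
  show ?thesis
    by (intro conjI ballI allI impI uA_nonneg uA_upper_bound uA_subaction_real uA_variation_real)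
      assumption+
qed

end
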